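(* A Borel subset $B\subseteq\mathbb{Z}^\omega$ is Haar null if and only if there exists a sequence of positive integers $(a(n))_{n\in\omega}$ such that $\mu_a(B+x)=0$ for every $x\in\mathbb{Z}^\omega$.
   Context: $\mathbb{Z}^\omega$ is the group of integer sequences under coordinatewise addition with the product of discrete topologies. If $G$ is a Polish group, a set $A\subseteq G$ is called Haar null if there exist a Borel set $B\supseteq A$ and a Borel probability measure $\mu$ on $G$ such that $\mu(gBh)=0$ for every $g,h\in G$. For a positive integer $k$, $\varrho_k$ is the uniform probability measure on $\llbracket 0,k\rrbracket=[0,k]\cap\mathbb{Z}$, i.e. the measure on $\mathbb{Z}$ given by $\varrho_k(X)=\frac{|X\cap\llbracket 0,k\rrbracket|}{k+1}$. For a sequence $(a(n))_{n\in\omega}$ of positive integers, $\mu_a$ is the product Borel probability measure $\bigotimes_{n\in\omega}\varrho_{a(n)}$ on $\mathbb{Z}^\omega$. *)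

theory Defs
  imports "HOL-Probability.Probability"
begin

text \<open>The group Z^omega is the type nat => int, with coordinatewise addition and the
product topology of the discrete topologies on int (the standard topology on int is discrete,
and nat => 'b carries the product topology from Function_Topology).\<close>

definition zadd :: "(nat \<Rightarrow> int) \<Rightarrow> (nat \<Rightarrow> int) \<Rightarrow> (nat \<Rightarrow> int)" where
  "zadd x y = (\<lambda>n. x n + y n)"

definition haar_null :: "(nat \<Rightarrow> int) set \<Rightarrow> bool" where
  "haar_null A \<longleftrightarrow> (\<exists>B \<in> sets borel. A \<subseteq> B \<and>
     (\<exists>\<mu>::(nat \<Rightarrow> int) measure. prob_space \<mu> \<and> sets \<mu> = sets borel \<and>
        (\<forall>g h. emeasure \<mu> ((\<lambda>b. zadd (zadd g b) h) ` B) = 0)))"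

definition rho :: "int \<Rightarrow> int measure" where
  "rho k = measure_pmf (pmf_of_set {0..k})"

definition mu :: "(nat \<Rightarrow> int) \<Rightarrow> (nat \<Rightarrow> int) measure" where
  "mu a = (\<Pi>\<^sub>M n\<in>UNIV. rho (a n))"

end

theory Submission
  imports Defs "HOL-Library.Function_Algebras"
begin

text \<open>
  If \<open>\<mu>\<^sub>a(B + x) = 0\<close> for all \<open>x\<close>, then \<open>\<mu>\<^sub>a\<close> itself witnesses that \<open>B\<close> is Haar null.
  Conversely, let \<open>\<mu>\<close> witness Haar nullness. By tightness some box
  \<open>K = {y. \<forall>n. \<bar>y n\<bar> \<le> c n}\<close> has positive \<open>\<mu>\<close>-measure; put \<open>a n = 2\<^sup>n (2 c n + 1)\<close>.
  Shifting each coordinate cyclically in \<open>[0, a n]\<close> shows that \<open>\<mu>\<^sub>a\<close> is invariant under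
  translations by vectors bounded by \<open>c\<close>, as long as the translated set lies in the margin box
  \<open>S = {z. \<forall>n. c n \<le> z n \<le> a n - c n}\<close>. By Fubini, \<open>\<mu>\<^sub>a(C - y) = 0\<close> for \<open>\<mu>\<close>-almost
  every \<open>y\<close>, where \<open>C = B + x\<close>; choosing such a \<open>y \<in> K\<close> gives
  \<open>\<mu>\<^sub>a(C \<inter> S) = \<mu>\<^sub>a((C \<inter> S) - y) \<le> \<mu>\<^sub>a(C - y) = 0\<close>. Finally the margins \<open>z n \<notin> [c n, a n - c n]\<close>
  have \<open>\<mu>\<^sub>a\<close>-measure at most \<open>2\<^sup>-\<^sup>n\<close>, so by Borel--Cantelli almost every point lies in one of the
  countably many translates \<open>S + t\<close> with \<open>t\<close> finitely supported and bounded by \<open>c\<close>, each of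
  which meets \<open>C\<close> in a null set by the same argument.
\<close>

section \<open>The measurable group \<open>\<int>\<^sup>\<omega>\<close>\<close>

instance int :: second_countable_topology
proof
  show "\<exists>B::int set set. countable B \<and> open = generate_topology B"
    by (intro exI[of _ "range lessThan \<union> range greaterThan"]) (auto simp: open_int_def)
qed

lemma zadd_eq_plus [simp]: "zadd x y = x + y"
  by (simp add: zadd_def plus_fun_def)

abbreviation Zomega :: "(nat \<Rightarrow> int) measure" where
  "Zomega \<equiv> \<Pi>\<^sub>M n\<in>UNIV. count_space UNIV"

lemma sets_borel_Zomega: "sets (borel :: (nat \<Rightarrow> int) measure) = sets Zomega"
proof -
  have "sets Zomega = sets (\<Pi>\<^sub>M n\<in>UNIV. (borel :: int measure))"
    by (rule sets_PiM_cong) (auto simp: sets_borel_eq_count_space)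
  also have "\<dots> = sets borel"
    by (rule sets_PiM_equal_borel)
  finally show ?thesis ..
qed

lemma sets_Zomega_coordinate: "{z. P (z n)} \<in> sets Zomega"
proof -
  have "(\<lambda>z. z n) -` {x. P x} \<inter> space Zomega \<in> sets Zomega"
    by (rule measurable_sets[OF measurable_component_singleton]) auto
  then show ?thesis
    by (simp add: space_PiM vimage_def)
qed

lemma sets_Zomega_coordinatewise: "{z. \<forall>n. P n (z n)} \<in> sets Zomega"
proof -
  have "(\<Inter>n. {z. P n (z n)}) \<in> sets Zomega"
    using sets_Zomega_coordinate by blast
  then show ?thesis
    by (simp add: Inter_eq)
qed

lemma measurable_coordinatewise_Zomega: "(\<lambda>z n. f n (z n)) \<in> measurable Zomega Zomega"
  by (rule measurable_PiM_single')
     (auto intro!: measurable_compose[OF measurable_component_singleton])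

lemma measurable_translation_Zomega: "(\<lambda>z. x + z) \<in> measurable Zomega Zomega"
  using measurable_coordinatewise_Zomega[of "\<lambda>n. (+) (x n)"] by (simp add: plus_fun_def)

lemma translation_eq_vimage:
  fixes x :: "'a::ab_group_add"
  shows "(+) x ` C = (\<lambda>z. z - x) -` C"
  by (force simp: algebra_simps)

lemma sets_translation_Zomega: "C \<in> sets Zomega \<Longrightarrow> (+) x ` C \<in> sets Zomega"
  using measurable_sets[OF measurable_translation_Zomega, of C "- x"]
  by (simp add: translation_eq_vimage space_PiM)

lemma sets_mu: "sets (mu a) = sets Zomega"
  unfolding mu_def rho_def by (rule sets_PiM_cong) auto

lemma space_mu [simp]: "space (mu a) = UNIV"
  unfolding mu_def rho_def by (simp add: space_PiM)

lemma prob_space_rho: "prob_space (rho k)"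
  by (simp add: rho_def prob_space_measure_pmf)

lemma prob_space_mu: "prob_space (mu a)"
  unfolding mu_def by (rule prob_space_PiM) (simp add: prob_space_rho)

lemma emeasure_mu_coordinate:
  assumes "0 \<le> a n"
  shows "emeasure (mu a) {z. z n \<in> X} = card ({0..a n} \<inter> X) / card {0..a n}"
proof -
  have cylinder: "{z. z n \<in> X} = prod_emb UNIV (\<lambda>n. rho (a n)) {n} (\<Pi>\<^sub>E j\<in>{n}. X)"
    by (auto simp: prod_emb_iff PiE_iff rho_def)
  have "emeasure (mu a) {z. z n \<in> X} = (\<Prod>j\<in>{n}. emeasure (rho (a j)) X)"
    unfolding mu_def cylinder
    by (rule emeasure_PiM_emb) (auto simp: prob_space_measure_pmf rho_def)
  then have "emeasure (mu a) {z. z n \<in> X} = emeasure (rho (a n)) X"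
    by simp
  also have "\<dots> = card ({0..a n} \<inter> X) / card {0..a n}"
    unfolding rho_def by (rule emeasure_pmf_of_set) (use assms in auto)
  finally show ?thesis .
qed

section \<open>Invariance of \<open>\<mu>\<^sub>a\<close> under small translations\<close>

text \<open>
  \<open>cyclic_shift a s\<close> permutes \<open>{0..a}\<close> and agrees with \<open>\<lambda>k. k + s\<close> wherever the latter stays
  in \<open>{0..a}\<close>, so it transports small translations into measure-preserving maps of \<open>rho a\<close>.
\<close>
definition cyclic_shift :: "int \<Rightarrow> int \<Rightarrow> int \<Rightarrow> int" where
  "cyclic_shift a s k = (if k \<in> {0..a} then (k + s) mod (a + 1) else k)"

lemma cyclic_shift_mem_iff: "0 \<le> a \<Longrightarrow> cyclic_shift a s k \<in> {0..a} \<longleftrightarrow> k \<in> {0..a}"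
  unfolding cyclic_shift_def using pos_mod_bound[of "a + 1" "k + s"] by auto

lemma cyclic_shift_eq_add: "k \<in> {0..a} \<Longrightarrow> k + s \<in> {0..a} \<Longrightarrow> cyclic_shift a s k = k + s"
  unfolding cyclic_shift_def by simp

lemma inj_cyclic_shift:
  assumes "0 \<le> a"
  shows "inj (cyclic_shift a s)"
proof (rule injI)
  fix k l assume eq: "cyclic_shift a s k = cyclic_shift a s l"
  show "k = l"
  proof (cases "k \<in> {0..a}")
    case True
    then have l: "l \<in> {0..a}"
      using eq cyclic_shift_mem_iff[OF assms] by metis
    have "(k + s) mod (a + 1) = (l + s) mod (a + 1)"
      using eq True l by (simp add: cyclic_shift_def)
    then have "k mod (a + 1) = l mod (a + 1)"
      by (simp add: mod_eq_dvd_iff)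
    then show ?thesis
      using True l by simp
  next
    case False
    then have "l \<notin> {0..a}"
      using eq cyclic_shift_mem_iff[OF assms] by metis
    then show ?thesis
      using False eq by (auto simp: cyclic_shift_def)
  qed
qed

lemma measurable_rho: "f \<in> measurable (rho k) (rho l)"
  by (simp add: rho_def)

lemma distr_rho_cyclic_shift:
  assumes "0 \<le> a"
  shows "distr (rho a) (rho a) (cyclic_shift a s) = rho a"
proof -
  have "cyclic_shift a s ` {0..a} = {0..a}"
    using cyclic_shift_mem_iff[OF assms] inj_cyclic_shift[OF assms]
    by (intro endo_inj_surj) (auto intro: inj_on_subset)
  then have "map_pmf (cyclic_shift a s) (pmf_of_set {0..a}) = pmf_of_set {0..a}"
    using inj_cyclic_shift[OF assms] assms by (simp add: map_pmf_of_set_inj inj_on_subset[of _ UNIV])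
  moreover have "distr (rho a) (rho a) (cyclic_shift a s) = distr (rho a) (count_space UNIV) (cyclic_shift a s)"
    by (rule distr_cong) (auto simp: rho_def)
  ultimately show ?thesis
    unfolding rho_def by (simp add: map_pmf_rep_eq[symmetric])
qed

lemma distr_PiM_coordinatewise:
  assumes M: "\<And>i. i \<in> I \<Longrightarrow> prob_space (M i)"
    and f: "\<And>i. i \<in> I \<Longrightarrow> f i \<in> measurable (M i) (M i)"
    and preserving: "\<And>i. i \<in> I \<Longrightarrow> distr (M i) (M i) (f i) = M i"
  shows "distr (PiM I M) (PiM I M) (\<lambda>x. \<lambda>i\<in>I. f i (x i)) = PiM I M"
proof (rule measure_eqI_PiM_infinite[symmetric, OF refl])
  have F: "(\<lambda>x. \<lambda>i\<in>I. f i (x i)) \<in> measurable (PiM I M) (PiM I M)"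
    using f by (intro measurable_restrict measurable_compose[OF measurable_component_singleton]) auto
  then show "sets (distr (PiM I M) (PiM I M) (\<lambda>x. \<lambda>i\<in>I. f i (x i))) = sets (PiM I M)"
    by simp
  show "finite_measure (PiM I M)"
    using M prob_space_PiM prob_space.finite_measure by blast
  fix A J assume J: "finite J" "J \<subseteq> I" and A: "\<And>i. i \<in> J \<Longrightarrow> A i \<in> sets (M i)"
  let ?X = "prod_emb I M J (Pi\<^sub>E J A)"
  have "(\<lambda>x. \<lambda>i\<in>I. f i (x i)) -` ?X \<inter> space (PiM I M)
      = prod_emb I M J (\<Pi>\<^sub>E j\<in>J. f j -` A j \<inter> space (M j))"
    using J by (auto simp: prod_emb_def space_PiM PiE_iff subset_eq) (meson f measurable_space)
  moreover have "?X \<in> sets (PiM I M)"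
    using J A by (intro sets_PiM_I) auto
  ultimately have "emeasure (distr (PiM I M) (PiM I M) (\<lambda>x. \<lambda>i\<in>I. f i (x i))) ?X
      = (\<Prod>j\<in>J. emeasure (M j) (f j -` A j \<inter> space (M j)))"
    using J A M f by (simp add: emeasure_distr[OF F] emeasure_PiM_emb subset_eq)
  also have "\<dots> = (\<Prod>j\<in>J. emeasure (M j) (A j))"
    using J A f preserving by (intro prod.cong refl) (metis emeasure_distr subsetD)
  also have "\<dots> = emeasure (PiM I M) ?X"
    using J A M by (simp add: emeasure_PiM_emb subset_eq)
  finally show "emeasure (PiM I M) ?X = emeasure (distr (PiM I M) (PiM I M) (\<lambda>x. \<lambda>i\<in>I. f i (x i))) ?X"
    ..
qed

definition margin_box :: "(nat \<Rightarrow> int) \<Rightarrow> (nat \<Rightarrow> int) \<Rightarrow> (nat \<Rightarrow> int) set" where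
  "margin_box c a = {z. \<forall>n. z n \<in> {c n..a n - c n}}"

lemma sets_margin_box: "margin_box c a \<in> sets Zomega"
  unfolding margin_box_def by (rule sets_Zomega_coordinatewise)

lemma emeasure_mu_translation_margin_box:
  assumes a: "\<And>n. 0 \<le> a n" and t: "\<And>n. \<bar>t n\<bar> \<le> c n"
    and A: "A \<in> sets Zomega" "A \<subseteq> margin_box c a"
  shows "emeasure (mu a) ((+) t ` A) = emeasure (mu a) A"
proof -
  define \<Phi> where "\<Phi> = (\<lambda>z n. cyclic_shift (a n) (t n) (z n))"
  have \<Phi>: "\<Phi> \<in> measurable (mu a) (mu a)"
    unfolding \<Phi>_def measurable_cong_sets[OF sets_mu sets_mu]
    by (rule measurable_coordinatewise_Zomega)
  have "distr (mu a) (mu a) \<Phi> = mu a"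
    using distr_PiM_coordinatewise[of UNIV "\<lambda>n. rho (a n)" "\<lambda>n. cyclic_shift (a n) (t n)"] a
    unfolding mu_def \<Phi>_def by (simp add: prob_space_rho measurable_rho distr_rho_cyclic_shift restrict_UNIV)
  moreover have "inj \<Phi>"
    by (rule injI) (auto simp: \<Phi>_def fun_eq_iff dest: injD[OF inj_cyclic_shift[OF a]])
  moreover have "\<Phi> ` A = (+) t ` A"
  proof (rule image_cong[OF refl])
    fix z assume "z \<in> A"
    then have z: "z n \<in> {c n..a n - c n}" for n
      using A(2) by (auto simp: margin_box_def)
    have "z n \<in> {0..a n}" "z n + t n \<in> {0..a n}" for n
      using z[of n] t[of n] by (auto simp: abs_le_iff)
    then show "\<Phi> z = t + z"
      unfolding \<Phi>_def plus_fun_def by (simp add: cyclic_shift_eq_add add.commute)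
  qed
  moreover have "(+) t ` A \<in> sets (mu a)"
    using sets_translation_Zomega[OF A(1)] by (simp add: sets_mu)
  ultimately show ?thesis
    using emeasure_distr[OF \<Phi>, of "(+) t ` A"] by (metis inj_vimage_image_eq space_mu Int_UNIV_right)
qed

section \<open>Tightness and Fubini\<close>

definition symmetric_box :: "(nat \<Rightarrow> int) \<Rightarrow> (nat \<Rightarrow> int) set" where
  "symmetric_box c = {y. \<forall>n. \<bar>y n\<bar> \<le> c n}"

lemma measure_coordinate_tail_tendsto_0:
  assumes "finite_measure \<mu>" and sets_\<mu>: "sets \<mu> = sets Zomega"
  shows "(\<lambda>k::nat. measure \<mu> {y. int k < \<bar>y n\<bar>}) \<longlonglongrightarrow> 0"
proof -
  interpret finite_measure \<mu> by fact
  have "(\<Inter>k. {y. int k < \<bar>y n\<bar>}) = {}"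
    by (auto intro: exI[of _ "nat \<bar>_ n\<bar>"]) (metis int_nat_eq less_irrefl abs_ge_zero)
  moreover have "(\<lambda>k. measure \<mu> {y. int k < \<bar>y n\<bar>}) \<longlonglongrightarrow> measure \<mu> (\<Inter>k. {y. int k < \<bar>y n\<bar>})"
    using sets_Zomega_coordinate[of "\<lambda>x. int _ < \<bar>x\<bar>" n]
    by (intro finite_Lim_measure_decseq) (auto simp: decseq_def sets_\<mu>)
  ultimately show ?thesis
    by simp
qed

lemma exists_symmetric_box_not_null:
  assumes "prob_space \<mu>" and sets_\<mu>: "sets \<mu> = sets Zomega"
  obtains c where "\<And>n. 0 \<le> c n" and "emeasure \<mu> (symmetric_box c) \<noteq> 0"
proof -
  interpret prob_space \<mu> by fact
  let ?tail = "\<lambda>n (k::nat). {y::nat \<Rightarrow> int. int k < \<bar>y n\<bar>}"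
  have tail_sets: "?tail n k \<in> sets \<mu>" for n k
    unfolding sets_\<mu> by (rule sets_Zomega_coordinate)
  have "\<exists>k. measure \<mu> (?tail n k) < (1/2) ^ Suc (Suc n)" for n
  proof -
    have "\<forall>\<^sub>F k in sequentially. measure \<mu> (?tail n k) < (1/2) ^ Suc (Suc n)"
      using measure_coordinate_tail_tendsto_0[OF finite_measure_axioms sets_\<mu>] by (rule order_tendstoD) simp
    then show ?thesis
      by (meson eventually_sequentially order_refl)
  qed
  then obtain k where k: "\<And>n. measure \<mu> (?tail n (k n)) < (1/2) ^ Suc (Suc n)"
    by metis
  let ?U = "\<Union>n. ?tail n (k n)"
  have geometric: "(\<lambda>n. (1/2::real) ^ Suc (Suc n)) sums (1/2)"
    using sums_mult[OF geometric_sums[of "1/2::real"], of "1/4"] by (simp add: power_Suc)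
  have summable_tails: "summable (\<lambda>n. measure \<mu> (?tail n (k n)))"
    by (rule summable_comparison_test'[OF sums_summable[OF geometric], of 0])
       (use k in \<open>auto simp: less_imp_le\<close>)
  have "measure \<mu> ?U \<le> (\<Sum>n. measure \<mu> (?tail n (k n)))"
    using tail_sets summable_tails by (intro finite_measure_subadditive_countably) auto
  also have "\<dots> \<le> (\<Sum>n. (1/2::real) ^ Suc (Suc n))"
    by (rule suminf_le[OF _ summable_tails sums_summable[OF geometric]])
       (use k in \<open>auto simp: less_imp_le\<close>)
  also have "\<dots> = 1/2"
    using geometric by (rule sums_unique[symmetric])
  finally have "measure \<mu> ?U \<le> 1/2" .
  moreover have "symmetric_box (\<lambda>n. int (k n)) = space \<mu> - ?U"
    using sets_eq_imp_space_eq[OF sets_\<mu>] by (auto simp: symmetric_box_def space_PiM not_less) (meson leD)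
  ultimately have "measure \<mu> (symmetric_box (\<lambda>n. int (k n))) > 0"
    using prob_compl[of ?U] tail_sets by auto
  then show ?thesis
    by (intro that[of "\<lambda>n. int (k n)"]) (auto simp: emeasure_eq_measure)
qed

lemma measurable_add_Zomega: "(\<lambda>p. fst p + snd p) \<in> measurable (Zomega \<Otimes>\<^sub>M Zomega) Zomega"
proof -
  have "(\<lambda>p. fst p n + snd p n) \<in> measurable (Zomega \<Otimes>\<^sub>M Zomega) (count_space UNIV)" for n
  proof -
    have "(\<lambda>p. (fst p n, snd p n)) \<in> measurable (Zomega \<Otimes>\<^sub>M Zomega) (count_space UNIV \<Otimes>\<^sub>M count_space UNIV)"
      by measurable
    then have "(\<lambda>p. (fst p n, snd p n)) \<in> measurable (Zomega \<Otimes>\<^sub>M Zomega) (count_space (UNIV :: (int \<times> int) set))"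
      by (simp add: pair_measure_countable)
    then show ?thesis
      using measurable_compose[of _ _ _ "\<lambda>(u, v). u + v" "count_space UNIV"] by simp
  qed
  then show ?thesis
    by (auto simp: plus_fun_def intro!: measurable_PiM_single')
qed

lemma AE_translation_null:
  assumes "sigma_finite_measure \<mu>" "sigma_finite_measure \<nu>"
    and sets_\<mu>: "sets \<mu> = sets Zomega" and sets_\<nu>: "sets \<nu> = sets Zomega" and C: "C \<in> sets Zomega"
    and null: "\<And>x. emeasure \<mu> ((+) x ` C) = 0"
  shows "AE y in \<mu>. emeasure \<nu> ((+) (- y) ` C) = 0"
proof -
  interpret pair_sigma_finite \<mu> \<nu>
    using assms by (auto simp: pair_sigma_finite_def)
  define G where "G = {p \<in> space (\<mu> \<Otimes>\<^sub>M \<nu>). fst p + snd p \<in> C}"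
  have space_\<mu>: "space \<mu> = UNIV" and space_\<nu>: "space \<nu> = UNIV"
    using sets_eq_imp_space_eq[OF sets_\<mu>] sets_eq_imp_space_eq[OF sets_\<nu>] by (simp_all add: space_PiM)
  have "(\<lambda>p. fst p + snd p) \<in> measurable (\<mu> \<Otimes>\<^sub>M \<nu>) Zomega"
    using measurable_add_Zomega
    by (simp add: measurable_cong_sets[OF sets_pair_measure_cong[OF sets_\<mu> sets_\<nu>] refl])
  then have G: "G \<in> sets (\<mu> \<Otimes>\<^sub>M \<nu>)"
    unfolding G_def using C by measurable
  have "emeasure (\<mu> \<Otimes>\<^sub>M \<nu>) G = (\<integral>\<^sup>+y. emeasure \<mu> ((\<lambda>x. (x, y)) -` G) \<partial>\<nu>)"
    by (rule emeasure_pair_measure_alt2[OF G])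
  also have "\<dots> = 0"
  proof -
    have "(\<lambda>x. (x, y)) -` G = (+) (- y) ` C" for y
      unfolding translation_eq_vimage by (auto simp: G_def space_pair_measure space_\<mu> space_\<nu>)
    moreover have "emeasure \<mu> ((+) (- y) ` C) = 0" for y
      by (rule null)
    ultimately show ?thesis
      by simp
  qed
  finally have "emeasure (\<mu> \<Otimes>\<^sub>M \<nu>) G = 0" .
  then have "(\<integral>\<^sup>+x. emeasure \<nu> (Pair x -` G) \<partial>\<mu>) = 0"
    by (simp add: M2.emeasure_pair_measure_alt[OF G])
  then have "AE x in \<mu>. emeasure \<nu> (Pair x -` G) = 0"
    by (simp add: nn_integral_0_iff_AE[OF measurable_emeasure_Pair1[OF G]])
  moreover have "Pair x -` G = (+) (- x) ` C" for x
    unfolding translation_eq_vimage by (auto simp: G_def space_pair_measure space_\<mu> space_\<nu> add.commute)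
  ultimately show ?thesis
    by simp
qed

lemma emeasure_mu_inter_margin_box:
  assumes "prob_space \<mu>" and sets_\<mu>: "sets \<mu> = sets Zomega" and C: "C \<in> sets Zomega"
    and null: "\<And>x. emeasure \<mu> ((+) x ` C) = 0"
    and box: "emeasure \<mu> (symmetric_box c) \<noteq> 0" and a: "\<And>n. 0 \<le> a n"
  shows "emeasure (mu a) (C \<inter> margin_box c a) = 0"
proof -
  have box_sets: "symmetric_box c \<in> sets \<mu>"
    unfolding symmetric_box_def sets_\<mu> by (rule sets_Zomega_coordinatewise)
  have AE_null: "AE y in \<mu>. emeasure (mu a) ((+) (- y) ` C) = 0"
    using assms prob_space_mu
    by (intro AE_translation_null) (auto simp: prob_space_imp_sigma_finite sets_mu)
  have "\<exists>y\<in>symmetric_box c. emeasure (mu a) ((+) (- y) ` C) = 0"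
  proof (rule ccontr)
    assume "\<not> ?thesis"
    then have "AE y in \<mu>. y \<notin> symmetric_box c"
      using AE_null by (auto elim: AE_mp)
    then show False
      using box AE_iff_null_sets[OF box_sets] by auto
  qed
  then obtain y where y: "y \<in> symmetric_box c" and y_null: "emeasure (mu a) ((+) (- y) ` C) = 0"
    by blast
  have A: "C \<inter> margin_box c a \<in> sets Zomega"
    using C sets_margin_box by (rule sets.Int)
  have "emeasure (mu a) (C \<inter> margin_box c a) = emeasure (mu a) ((+) (- y) ` (C \<inter> margin_box c a))"
    using y by (intro emeasure_mu_translation_margin_box[where c=c, symmetric] a A) (auto simp: symmetric_box_def)
  also have "\<dots> \<le> emeasure (mu a) ((+) (- y) ` C)"
    using sets_translation_Zomega[OF C, of "- y"] by (intro emeasure_mono) (auto simp: sets_mu)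
  finally show ?thesis
    using y_null by simp
qed

section \<open>Borel--Cantelli on the margins\<close>

lemma card_outside_margin_le:
  fixes a c :: int
  assumes "0 \<le> c"
  shows "real (card ({0..a} - {c..a - c})) \<le> 2 * c"
proof -
  have "card ({0..a} - {c..a - c}) \<le> card ({0..c - 1} \<union> {a - c + 1..a})"
    by (intro card_mono) auto
  also have "\<dots> \<le> card {0..c - 1} + card {a - c + 1..a}"
    by (rule card_Un_le)
  finally show ?thesis
    using assms by simp
qed

lemma measure_mu_outside_margin_le:
  assumes c: "0 \<le> c n" and a: "a n = 2 ^ n * (2 * c n + 1)"
  shows "measure (mu a) {z. z n \<notin> {c n..a n - c n}} \<le> (1/2) ^ n"
proof -
  have "0 \<le> a n"
    using a c by simp
  then have "measure (mu a) {z. z n \<notin> {c n..a n - c n}} = card ({0..a n} - {c n..a n - c n}) / (a n + 1)"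
    using emeasure_mu_coordinate[of a n "- {c n..a n - c n}"]
    by (simp add: measure_def Diff_eq)
  also have "\<dots> \<le> 2 * c n / (2 ^ n * (2 * c n + 1))"
    using card_outside_margin_le[OF c, of "a n"] c a by (intro frac_le) auto
  also have "\<dots> \<le> (1/2) ^ n"
  proof -
    have "2 * real_of_int (c n) \<le> 2 * real_of_int (c n) + 1"
      by simp
    then show ?thesis
      using c by (simp add: power_one_over divide_le_eq mult.commute[of "2 ^ n"] pos_divide_le_eq)
  qed
  finally show ?thesis .
qed

lemma countable_eventually_zero: "countable {t :: nat \<Rightarrow> 'a::{zero, countable}. \<exists>N. \<forall>n\<ge>N. t n = 0}"
proof (rule countable_subset)
  show "{t. \<exists>N. \<forall>n\<ge>N. t n = 0} \<subseteq> range (\<lambda>xs n. if n < length xs then xs ! n else 0 :: 'a)"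
  proof clarify
    fix t :: "nat \<Rightarrow> 'a" and N assume "\<forall>n\<ge>N. t n = 0"
    then have "t = (\<lambda>n. if n < length (map t [0..<N]) then map t [0..<N] ! n else 0)"
      by (auto simp: fun_eq_iff)
    then show "t \<in> range (\<lambda>xs n. if n < length xs then xs ! n else 0)"
      by blast
  qed
qed simp

definition bounded_perturbations :: "(nat \<Rightarrow> int) \<Rightarrow> (nat \<Rightarrow> int) set" where
  "bounded_perturbations c = {t. (\<exists>N. \<forall>n\<ge>N. t n = 0) \<and> (\<forall>n. \<bar>t n\<bar> \<le> c n)}"

lemma countable_bounded_perturbations: "countable (bounded_perturbations c)"
  unfolding bounded_perturbations_def by (rule countable_subset[OF _ countable_eventually_zero]) auto

lemma two_mul_le_margin_weight:
  fixes c :: int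
  assumes "0 \<le> c"
  shows "2 * c \<le> 2 ^ n * (2 * c + 1)"
proof -
  have "1 * (2 * c + 1) \<le> 2 ^ n * (2 * c + 1)"
    using assms by (intro mult_right_mono) auto
  then show ?thesis
    by simp
qed

lemma AE_mu_perturbed_margin_box:
  assumes c: "\<And>n. 0 \<le> c n" and a: "\<And>n. a n = 2 ^ n * (2 * c n + 1)"
  shows "AE z in mu a. \<exists>t\<in>bounded_perturbations c. z - t \<in> margin_box c a"
proof -
  interpret mu: prob_space "mu a"
    by (rule prob_space_mu)
  have a_ge: "2 * c n \<le> a n" for n
    using two_mul_le_margin_weight[OF c] by (simp add: a)
  have in_range: "AE z in mu a. \<forall>n. z n \<in> {0..a n}"
    unfolding AE_all_countable
  proof
    fix n
    have "emeasure (mu a) {z. z n \<in> - {0..a n}} = 0"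
      using emeasure_mu_coordinate[of a n "- {0..a n}"] a_ge[of n] c[of n] by simp
    then have "{z. z n \<notin> {0..a n}} \<in> null_sets (mu a)"
      using sets_Zomega_coordinate[of "\<lambda>x. x \<notin> {0..a n}" n] by (simp add: null_sets_def sets_mu)
    then show "AE z in mu a. z n \<in> {0..a n}"
      by (rule AE_not_in[THEN AE_mp]) simp
  qed
  have in_margin: "AE z in mu a. \<forall>\<^sub>F n in sequentially. z n \<in> {c n..a n - c n}"
  proof -
    have "summable (\<lambda>n. measure (mu a) {z. z n \<notin> {c n..a n - c n}})"
      by (rule summable_comparison_test'[OF summable_geometric[of "1/2"], of 0])
         (use measure_mu_outside_margin_le[where c = c and a = a, OF c a] in auto)
    moreover have "{z. z n \<notin> {c n..a n - c n}} \<in> sets (mu a)" for n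
      unfolding sets_mu by (rule sets_Zomega_coordinate)
    ultimately show ?thesis
      using borel_cantelli_AE1[of "\<lambda>n. {z. z n \<notin> {c n..a n - c n}}" "mu a"]
      by (simp add: mu.emeasure_eq_measure)
  qed
  show ?thesis
    using in_range in_margin
  proof eventually_elim
    case (elim z)
    obtain N where N: "\<And>n. N \<le> n \<Longrightarrow> z n \<in> {c n..a n - c n}"
      using elim(2) by (auto simp: eventually_sequentially)
    define w where "w n = max (c n) (min (a n - c n) (z n))" for n
    have "\<bar>z n - w n\<bar> \<le> c n" for n
      using elim(1) c[of n] a_ge[of n] unfolding w_def by (simp add: abs_le_iff max_def min_def)
    moreover have "z n - w n = 0" if "N \<le> n" for n
      using N[OF that] by (simp add: w_def)
    ultimately have "z - w \<in> bounded_perturbations c"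
      by (auto simp: bounded_perturbations_def)
    moreover have "w \<in> margin_box c a"
      using a_ge c by (auto simp: margin_box_def w_def)
    ultimately show ?case
      by (intro bexI[of _ "z - w"]) simp_all
  qed
qed

section \<open>Haar null sets\<close>

lemma emeasure_mu_eq_0_if_translates_null:
  assumes "prob_space \<mu>" and sets_\<mu>: "sets \<mu> = sets Zomega" and C: "C \<in> sets Zomega"
    and null: "\<And>x. emeasure \<mu> ((+) x ` C) = 0"
    and c: "\<And>n. 0 \<le> c n" and box: "emeasure \<mu> (symmetric_box c) \<noteq> 0"
    and a: "\<And>n. a n = 2 ^ n * (2 * c n + 1)"
  shows "emeasure (mu a) C = 0"
proof -
  have a_nonneg: "0 \<le> a n" for n
    using order.trans[OF _ two_mul_le_margin_weight[OF c]] c[of n] by (simp add: a)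
  have pieces: "AE z in mu a. \<forall>t\<in>bounded_perturbations c. z \<notin> (+) t ` ((+) (- t) ` C \<inter> margin_box c a)"
  proof (rule AE_ball_countable'[OF _ countable_bounded_perturbations])
    fix t assume t: "t \<in> bounded_perturbations c"
    define A where "A = (+) (- t) ` C \<inter> margin_box c a"
    have C': "(+) (- t) ` C \<in> sets Zomega"
      by (rule sets_translation_Zomega[OF C])
    then have A: "A \<in> sets Zomega"
      unfolding A_def by (intro sets.Int sets_margin_box)
    have "emeasure \<mu> ((+) x ` (+) (- t) ` C) = 0" for x
      unfolding translation_assoc by (rule null)
    then have "emeasure (mu a) A = 0"
      unfolding A_def
      by (rule emeasure_mu_inter_margin_box[where a = a, OF \<open>prob_space \<mu>\<close> sets_\<mu> C' _ box a_nonneg])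
    moreover have "emeasure (mu a) ((+) t ` A) = emeasure (mu a) A"
      using t A by (intro emeasure_mu_translation_margin_box[where c = c] a_nonneg)
                   (auto simp: bounded_perturbations_def A_def)
    moreover have "(+) t ` A \<in> sets (mu a)"
      unfolding sets_mu by (rule sets_translation_Zomega[OF A])
    ultimately show "AE z in mu a. z \<notin> (+) t ` ((+) (- t) ` C \<inter> margin_box c a)"
      unfolding A_def[symmetric] by (intro AE_not_in) (simp add: null_sets_def)
  qed
  have "AE z in mu a. z \<notin> C"
    using AE_mu_perturbed_margin_box[OF c a] pieces
  proof eventually_elim
    case (elim z)
    then show ?case
      by (force simp: translation_eq_vimage)
  qed
  then show ?thesis
    using AE_iff_measurable[of C "mu a" "\<lambda>z. z \<notin> C"] C by (simp add: sets_mu)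
qed

lemma exists_mu_translates_null:
  assumes "prob_space \<mu>" and sets_\<mu>: "sets \<mu> = sets Zomega" and B: "B \<in> sets Zomega"
    and null: "\<And>x. emeasure \<mu> ((+) x ` B) = 0"
  obtains a where "\<And>n. 0 < a n" and "\<And>x. emeasure (mu a) ((+) x ` B) = 0"
proof -
  obtain c where c: "\<And>n. 0 \<le> c n" and box: "emeasure \<mu> (symmetric_box c) \<noteq> 0"
    using exists_symmetric_box_not_null[OF assms(1,2)] by blast
  define a where "a n = 2 ^ n * (2 * c n + 1)" for n
  have "emeasure \<mu> ((+) z ` (+) x ` B) = 0" for x z
    unfolding translation_assoc by (rule null)
  then have "emeasure (mu a) ((+) x ` B) = 0" for x
    by (rule emeasure_mu_eq_0_if_translates_null[OF assms(1) sets_\<mu> sets_translation_Zomega[OF B] _ c box a_def])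
  moreover have "0 < a n" for n
    using c[of n] by (simp add: a_def)
  ultimately show ?thesis
    using that by blast
qed

theorem theorem3p1:
  fixes B :: "(nat \<Rightarrow> int) set"
  assumes "B \<in> sets borel"
  shows "haar_null B \<longleftrightarrow>
    (\<exists>a::nat \<Rightarrow> int. (\<forall>n. a n > 0) \<and>
       (\<forall>x. emeasure (mu a) ((\<lambda>b. zadd b x) ` B) = 0))"
proof
  assume "haar_null B"
  then obtain B' \<mu> where B': "B' \<in> sets Zomega" "B \<subseteq> B'" and \<mu>: "prob_space \<mu>" "sets \<mu> = sets Zomega"
    and null: "\<And>g h. emeasure \<mu> ((\<lambda>b. g + b + h) ` B') = 0"
    unfolding haar_null_def sets_borel_Zomega by auto
  have "emeasure \<mu> ((+) x ` B') = 0" for x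
    using null[of 0 x] by (simp add: add.commute)
  then obtain a where "\<And>n. 0 < a n" and null_a: "\<And>x. emeasure (mu a) ((+) x ` B') = 0"
    using exists_mu_translates_null[OF \<mu> B'(1)] by blast
  moreover have "emeasure (mu a) ((\<lambda>b. zadd b x) ` B) = 0" for x
  proof (rule emeasure_eq_0[OF _ null_a])
    show "(+) x ` B' \<in> sets (mu a)"
      unfolding sets_mu by (rule sets_translation_Zomega[OF B'(1)])
    show "(\<lambda>b. zadd b x) ` B \<subseteq> (+) x ` B'"
      using B'(2) by (auto simp: add.commute)
  qed
  ultimately show "\<exists>a. (\<forall>n. 0 < a n) \<and> (\<forall>x. emeasure (mu a) ((\<lambda>b. zadd b x) ` B) = 0)"
    by blast
next
  assume "\<exists>a. (\<forall>n. 0 < a n) \<and> (\<forall>x. emeasure (mu a) ((\<lambda>b. zadd b x) ` B) = 0)"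
  then obtain a where null: "\<And>x. emeasure (mu a) ((\<lambda>b. b + x) ` B) = 0"
    by auto
  have "emeasure (mu a) ((\<lambda>b. zadd (zadd g b) h) ` B) = 0" for g h
    using null[of "g + h"] by (simp add: ac_simps)
  then show "haar_null B"
    unfolding haar_null_def using assms prob_space_mu sets_mu sets_borel_Zomega by blast
qed

end
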